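(* Let $p_1,\ldots,p_m\in[0,1]$ and $\alpha\in[0,1]$, and let $\mathcal{U}_\alpha$, $\mathcal{X}_\alpha$, $p_{(i:I)}$ and $h_\alpha$ be as in the context. Then for every $I\subseteq\{1,\ldots,m\}$: $I\in\mathcal{X}_\alpha$ if and only if there exists some $1\le i\le |I|$ such that $h_\alpha\, p_{(i:I)}\le i\alpha$.
   Context: Setting: $m$ hypotheses with $p$-values $p_1,\ldots,p_m\in[0,1]$. For $I\subseteq\{1,\ldots,m\}$ and $1\le i\le |I|$, $p_{(i:I)}$ denotes the $i$-th smallest value of the multiset $\{p_j: j\in I\}$. The Simes local test at level $\alpha$ rejects $I$ (written $I\in\mathcal{U}_\alpha$) iff there is $1\le i\le |I|$ with $|I|\,p_{(i:I)}\le i\alpha$ (so $\emptyset\notin\mathcal{U}_\alpha$). Closed testing: $\mathcal{X}_\alpha=\{I\subseteq\{1,\ldots,m\}: J\in\mathcal{U}_\alpha \text{ for all } J\supseteq I,\ J\subseteq\{1,\ldots,m\}\}$. Let $r_1,\ldots,r_m$ be a permutation of $1,\ldots,m$ with $p_{r_1}\le\cdots\le p_{r_m}$, and $K_i=\{r_{m-i+1},\ldots,r_m\}$ (indices of the $i$ largest $p$-values), $i=0,\ldots,m$. Define $h_\alpha=\max\{0\le i\le m: K_i\notin\mathcal{U}_\alpha\}$. *)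

theory Defs
  imports Complex_Main "HOL-Library.Multiset"
begin

definition pord :: "(nat \<Rightarrow> real) \<Rightarrow> nat set \<Rightarrow> nat \<Rightarrow> real" where
  "pord p I i = sorted_list_of_multiset (image_mset p (mset_set I)) ! (i - 1)"

definition simes_rej :: "real \<Rightarrow> (nat \<Rightarrow> real) \<Rightarrow> nat set \<Rightarrow> bool" where
  "simes_rej \<alpha> p I \<longleftrightarrow> (\<exists>i\<in>{1..card I}. real (card I) * pord p I i \<le> real i * \<alpha>)"

definition closed_rej :: "real \<Rightarrow> (nat \<Rightarrow> real) \<Rightarrow> nat \<Rightarrow> nat set set" where
  "closed_rej \<alpha> p m = {I. I \<subseteq> {1..m} \<and>
      (\<forall>J. I \<subseteq> J \<and> J \<subseteq> {1..m} \<longrightarrow> simes_rej \<alpha> p J)}"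

definition Kset :: "(nat \<Rightarrow> nat) \<Rightarrow> nat \<Rightarrow> nat \<Rightarrow> nat set" where
  "Kset r m i = r ` {m - i + 1..m}"

definition h_alpha :: "real \<Rightarrow> (nat \<Rightarrow> real) \<Rightarrow> (nat \<Rightarrow> nat) \<Rightarrow> nat \<Rightarrow> nat" where
  "h_alpha \<alpha> p r m = Max {i. i \<le> m \<and> \<not> simes_rej \<alpha> p (Kset r m i)}"

end

(*
  The largest-p-value sets K_s are the hardest sets of size s to reject: for any J of size s the
  i-th smallest p-value of J is at most the i-th smallest p-value of K_s. Hence every set of size
  greater than h_alpha is rejected, while K_(h_alpha) itself is not. If h_alpha p_(i:I) <= i alpha,
  every superset J of I of size at most h_alpha is rejected at the same index i, because
  |J| <= h_alpha and p_(i:J) <= p_(i:I). Conversely, padding I with the largest p-values gives a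
  superset of size exactly h_alpha; the index at which it is rejected cannot point into the padding
  (that would reject K_(h_alpha)), so it points into I and yields the required inequality.
*)

theory Submission
  imports Defs
begin

definition nth_least :: "nat set \<Rightarrow> nat \<Rightarrow> nat" where
  "nth_least S i = sorted_list_of_set S ! (i - 1)"

lemma nth_least_in:
  assumes "finite S" "1 \<le> i" "i \<le> card S"
  shows "nth_least S i \<in> S"
  using assms nth_mem[of "i - 1" "sorted_list_of_set S"] by (simp add: nth_least_def)

lemma card_less_nth_least:
  assumes "finite S" "1 \<le> i" "i \<le> card S"
  shows "card {x\<in>S. x < nth_least S i} = i - 1"
proof -
  define xs where "xs = sorted_list_of_set S"
  have xs: "sorted_wrt (<) xs" "set xs = S" "length xs = card S"
    using assms(1) by (simp_all add: xs_def)
  have "{x\<in>S. x < xs ! (i - 1)} = (!) xs ` {..<i - 1}"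
  proof (intro set_eqI iffI)
    fix x assume x: "x \<in> {x\<in>S. x < xs ! (i - 1)}"
    then obtain a where a: "a < length xs" "x = xs ! a" using xs(2) by (auto simp: in_set_conv_nth)
    have "a < i - 1"
    proof (rule ccontr)
      assume "\<not> a < i - 1"
      then have "xs ! (i - 1) \<le> xs ! a"
        using a(1) xs(1) by (metis linorder_not_less order.order_iff_strict sorted_wrt_nth_less)
      then show False using x a by simp
    qed
    then show "x \<in> (!) xs ` {..<i - 1}" using a by auto
  next
    fix x assume "x \<in> (!) xs ` {..<i - 1}"
    then show "x \<in> {x\<in>S. x < xs ! (i - 1)}"
      using xs assms by (auto simp: sorted_wrt_iff_nth_less)
  qed
  moreover have "inj_on ((!) xs) {..<i - 1}"
    using xs assms by (auto simp: inj_on_def nth_eq_iff_index_eq strict_sorted_iff)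
  ultimately show ?thesis by (simp add: card_image nth_least_def xs_def)
qed

lemma nth_least_card_less:
  assumes "finite S" "k \<in> S"
  shows "nth_least S (Suc (card {x\<in>S. x < k})) = k"
proof -
  obtain j where "j < card S" "sorted_list_of_set S ! j = k"
    using assms in_set_conv_nth[of k "sorted_list_of_set S"] by auto
  then have i: "1 \<le> Suc j" "Suc j \<le> card S" "nth_least S (Suc j) = k"
    by (simp_all add: nth_least_def)
  then show ?thesis using card_less_nth_least[OF assms(1) i(1,2)] by simp
qed

lemma nth_least_antimono:
  assumes "finite T" "S \<subseteq> T" "1 \<le> i" "i \<le> card S"
  shows "nth_least T i \<le> nth_least S i"
proof (rule ccontr)
  define k where "k = nth_least S i"
  assume "\<not> nth_least T i \<le> k"
  have S: "finite S" using assms(2,1) by (rule finite_subset)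
  have "{x\<in>S. x \<le> k} = insert k {x\<in>S. x < k}"
    using nth_least_in[OF S assms(3,4)] by (auto simp: k_def)
  then have "card {x\<in>S. x \<le> k} = i"
    using S card_less_nth_least[OF S assms(3,4)] assms(3) by (simp add: k_def)
  moreover have "card {x\<in>S. x \<le> k} \<le> card {x\<in>T. x < nth_least T i}"
    using \<open>\<not> nth_least T i \<le> k\<close> assms(1,2) by (intro card_mono) auto
  moreover have "i \<le> card T" using card_mono[OF assms(1,2)] assms(4) by simp
  ultimately show False using card_less_nth_least[OF assms(1,3)] assms(3) by simp
qed

lemma card_ge_nth_least:
  assumes "finite S" "1 \<le> i" "i \<le> card S"
  shows "card {x\<in>S. nth_least S i \<le> x} = card S + 1 - i"
proof -
  have "S = {x\<in>S. x < nth_least S i} \<union> {x\<in>S. nth_least S i \<le> x}" by auto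
  then have "card S = card {x\<in>S. x < nth_least S i} + card {x\<in>S. nth_least S i \<le> x}"
    using assms(1) by (metis (no_types, lifting) card_Un_disjoint disjoint_iff finite_Un
        mem_Collect_eq not_le)
  then show ?thesis using card_less_nth_least[OF assms] assms(2) by simp
qed

lemma nth_least_plus_card_le:
  assumes "S \<subseteq> {..m}" "1 \<le> i" "i \<le> card S"
  shows "nth_least S i + card S \<le> m + i"
proof -
  have S: "finite S" using assms(1) finite_subset by blast
  have "{x\<in>S. nth_least S i \<le> x} \<subseteq> {nth_least S i..m}" using assms(1) by auto
  from card_mono[OF _ this] have "card S + 1 - i \<le> Suc m - nth_least S i"
    using card_ge_nth_least[OF S assms(2,3)] by simp
  moreover have "nth_least S i \<le> m" using nth_least_in[OF S assms(2,3)] assms(1) by auto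
  ultimately show ?thesis using assms(2,3) by linarith
qed

lemma nth_least_plus_card_eq:
  assumes "S \<subseteq> {..m}" "1 \<le> i" "i \<le> card S" "{nth_least S i..m} \<subseteq> S"
  shows "nth_least S i + card S = m + i"
proof -
  have S: "finite S" using assms(1) finite_subset by blast
  have "{x\<in>S. nth_least S i \<le> x} = {nth_least S i..m}" using assms(1,4) by auto
  then have "card S + 1 - i = Suc m - nth_least S i"
    using card_ge_nth_least[OF S assms(2,3)] by simp
  moreover have "nth_least S i \<le> m" using nth_least_in[OF S assms(2,3)] assms(1) by auto
  ultimately show ?thesis using assms(2,3) by linarith
qed

lemma nth_least_atLeastAtMost:
  assumes "1 \<le> i" "i \<le> Suc b - a"
  shows "nth_least {a..b} i = a + i - 1"
  using assms
  by (simp add: nth_least_def atLeastLessThanSuc_atLeastAtMost[symmetric] nth_upt del: upt_Suc)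

lemma nth_least_subset_eq:
  assumes "finite S" "R \<subseteq> S" "1 \<le> i" "i \<le> card S" "nth_least S i \<in> R"
    and lower: "{x\<in>S. x < nth_least S i} \<subseteq> R"
  shows "i \<le> card R" "nth_least R i = nth_least S i"
proof -
  have R: "finite R" using assms(2,1) by (rule finite_subset)
  have eq: "{x\<in>R. x < nth_least S i} = {x\<in>S. x < nth_least S i}" using assms(2) lower by blast
  have "{x\<in>R. x < nth_least S i} \<subset> R" using assms(5) by auto
  from psubset_card_mono[OF R this] show "i \<le> card R"
    using card_less_nth_least[OF assms(1,3,4)] eq by simp
  show "nth_least R i = nth_least S i"
    using nth_least_card_less[OF R assms(5)] card_less_nth_least[OF assms(1,3,4)] eq assms(3) by simp
qed

lemma pord_image_nth_least:
  fixes p :: "nat \<Rightarrow> real"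
  assumes "inj_on r A" "S \<subseteq> A" "finite S"
    and mono: "\<And>a b. a \<in> A \<Longrightarrow> b \<in> A \<Longrightarrow> a \<le> b \<Longrightarrow> p (r a) \<le> p (r b)"
    and "1 \<le> i" "i \<le> card S"
  shows "pord p (r ` S) i = p (r (nth_least S i))"
proof -
  define xs where "xs = sorted_list_of_set S"
  have "mset_set S = mset xs"
    unfolding xs_def by (metis mset_sorted_list_of_multiset sorted_list_of_mset_set)
  then have "mset_set (r ` S) = mset (map r xs)"
    using image_mset_mset_set[OF inj_on_subset[OF assms(1,2)]] by simp
  then have p_values: "image_mset p (mset_set (r ` S)) = mset (map (p \<circ> r) xs)"
    by (simp add: multiset.map_comp)
  have "sorted (map (p \<circ> r) xs)"
    unfolding sorted_iff_nth_mono
  proof (intro allI impI)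
    fix a b assume ab: "a \<le> b" "b < length (map (p \<circ> r) xs)"
    have "set xs \<subseteq> A" using assms(2,3) by (simp add: xs_def)
    then have "xs ! a \<in> A" "xs ! b \<in> A" using ab nth_mem[of a xs] nth_mem[of b xs] by auto
    with ab show "map (p \<circ> r) xs ! a \<le> map (p \<circ> r) xs ! b"
      using mono sorted_nth_mono[of xs a b] by (simp add: xs_def)
  qed
  then have "sorted_list_of_multiset (image_mset p (mset_set (r ` S))) = map (p \<circ> r) xs"
    unfolding p_values by (metis sorted_list_of_multiset_mset sorted_sort_id)
  then show ?thesis
    using assms(3,5,6) by (simp add: pord_def nth_least_def xs_def)
qed

lemma exists_card_Un_top_interval:
  assumes "finite R" "card R \<le> n" "n \<le> m"
  shows "\<exists>t\<le>n. card (R \<union> {m - t + 1..m}) = n"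
proof -
  define f where "f t = int (card (R \<union> {m - t + 1..m}))" for t
  have "\<bar>f (t + 1) - f t\<bar> \<le> 1" if "t < n" for t
  proof -
    have "R \<union> {m - (t + 1) + 1..m} = insert (m - t) (R \<union> {m - t + 1..m})"
      using that assms(3) by auto
    then show ?thesis using assms(1) by (simp add: f_def card_insert_if)
  qed
  moreover have "f 0 \<le> int n" using assms(2) by (simp add: f_def)
  moreover have "int n \<le> f n"
    using assms(1,3) card_mono[of "R \<union> {m - n + 1..m}" "{m - n + 1..m}"] by (simp add: f_def)
  ultimately show ?thesis using nat0_intermed_int_val[of n f "int n"] by (simp add: f_def)
qed

text \<open>Hypotheses are handled through their ranks: \<open>J = r ` R\<close> with \<open>R \<subseteq> {1..m}\<close>, and since \<open>r\<close>
  sorts the p-values, \<open>pord p J i\<close> is the p-value of the \<open>i\<close>-th smallest rank in \<open>R\<close>.\<close>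

locale simes_closed_testing =
  fixes \<alpha> :: real and p :: "nat \<Rightarrow> real" and r :: "nat \<Rightarrow> nat" and m :: nat
  assumes p_nonneg: "\<And>j. j \<in> {1..m} \<Longrightarrow> 0 \<le> p j"
    and r_perm: "bij_betw r {1..m} {1..m}"
    and r_sorted: "\<And>a b. a \<in> {1..m} \<Longrightarrow> b \<in> {1..m} \<Longrightarrow> a \<le> b \<Longrightarrow> p (r a) \<le> p (r b)"
begin

abbreviation h :: nat where "h \<equiv> h_alpha \<alpha> p r m"

lemma obtain_ranks:
  assumes "J \<subseteq> {1..m}"
  obtains R where "R \<subseteq> {1..m}" "J = r ` R"
  using assms r_perm subset_image_iff[of J r "{1..m}"] that by (auto simp: bij_betw_def)

lemma card_image_ranks: "R \<subseteq> {1..m} \<Longrightarrow> card (r ` R) = card R"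
  using r_perm by (auto simp: bij_betw_def intro: card_image inj_on_subset)

lemma nth_least_ranks:
  assumes "R \<subseteq> {1..m}" "1 \<le> i" "i \<le> card R"
  shows "nth_least R i \<in> {1..m}"
  using assms nth_least_in[of R i] finite_subset[OF assms(1)] by auto

lemma pord_image_ranks:
  assumes "R \<subseteq> {1..m}" "1 \<le> i" "i \<le> card R"
  shows "pord p (r ` R) i = p (r (nth_least R i))"
  using r_perm assms finite_subset[OF assms(1)]
  by (intro pord_image_nth_least[where A = "{1..m}"] r_sorted) (auto simp: bij_betw_def)

lemma simes_rej_image_ranks:
  assumes "R \<subseteq> {1..m}"
  shows "simes_rej \<alpha> p (r ` R) \<longleftrightarrow>
    (\<exists>i\<in>{1..card R}. real (card R) * p (r (nth_least R i)) \<le> real i * \<alpha>)"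
  using assms by (auto simp: simes_rej_def card_image_ranks pord_image_ranks)

lemma simes_rej_Kset:
  assumes "s \<le> m"
  shows "simes_rej \<alpha> p (Kset r m s) \<longleftrightarrow>
    (\<exists>i\<in>{1..s}. real s * p (r (m - s + i)) \<le> real i * \<alpha>)"
proof -
  have "{m - s + 1..m} \<subseteq> {1..m}" by auto
  then show ?thesis
    using assms by (auto simp: Kset_def simes_rej_image_ranks nth_least_atLeastAtMost)
qed

lemma h_alpha_le_m_and_not_simes_rej: "h \<le> m \<and> \<not> simes_rej \<alpha> p (Kset r m h)"
proof -
  let ?H = "{i. i \<le> m \<and> \<not> simes_rej \<alpha> p (Kset r m i)}"
  have "0 \<in> ?H" by (simp add: simes_rej_def Kset_def)
  then have "Max ?H \<in> ?H" by (intro Max_in) auto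
  then show ?thesis unfolding h_alpha_def by blast
qed

lemma simes_rej_Kset_above_h:
  assumes "h < s" "s \<le> m"
  shows "simes_rej \<alpha> p (Kset r m s)"
proof (rule ccontr)
  assume "\<not> simes_rej \<alpha> p (Kset r m s)"
  then have "s \<le> h"
    unfolding h_alpha_def using assms(2) by (intro Max_ge) auto
  then show False using assms(1) by simp
qed

lemma simes_rej_if_card_gt_h:
  assumes "J \<subseteq> {1..m}" "h < card J"
  shows "simes_rej \<alpha> p J"
proof -
  obtain R where R: "R \<subseteq> {1..m}" "J = r ` R" using obtain_ranks[OF assms(1)] .
  define s where "s = card R"
  have "s \<le> m" using card_mono[OF _ R(1)] by (simp add: s_def)
  moreover have "h < s" using assms(2) R card_image_ranks by (simp add: s_def)
  ultimately obtain i where i: "i \<in> {1..s}" "real s * p (r (m - s + i)) \<le> real i * \<alpha>"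
    using simes_rej_Kset simes_rej_Kset_above_h by blast
  have "R \<subseteq> {..m}" using R(1) by auto
  then have "nth_least R i + s \<le> m + i"
    using i(1) nth_least_plus_card_le by (simp add: s_def)
  then have "p (r (nth_least R i)) \<le> p (r (m - s + i))"
    using R(1) i(1) nth_least_ranks[of R i] \<open>s \<le> m\<close> by (intro r_sorted) (auto simp: s_def)
  then have "real s * p (r (nth_least R i)) \<le> real i * \<alpha>"
    using i(2) by (meson mult_left_mono of_nat_0_le_iff order_trans)
  then show ?thesis using R i(1) by (auto simp: simes_rej_image_ranks s_def)
qed

lemma pord_nonneg:
  assumes "J \<subseteq> {1..m}" "1 \<le> i" "i \<le> card J"
  shows "0 \<le> pord p J i"
proof -
  obtain R where R: "R \<subseteq> {1..m}" "J = r ` R" using obtain_ranks[OF assms(1)] .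
  then have "r (nth_least R i) \<in> {1..m}"
    using assms nth_least_ranks[of R i] r_perm card_image_ranks by (auto simp: bij_betw_def)
  then show ?thesis using R assms p_nonneg card_image_ranks pord_image_ranks by simp
qed

lemma pord_antimono:
  assumes "I \<subseteq> J" "J \<subseteq> {1..m}" "1 \<le> i" "i \<le> card I"
  shows "pord p J i \<le> pord p I i"
proof -
  obtain S where S: "S \<subseteq> {1..m}" "J = r ` S" using obtain_ranks[OF assms(2)] .
  obtain R where R: "R \<subseteq> {1..m}" "I = r ` R" using obtain_ranks[OF order_trans[OF assms(1,2)]] .
  have inj: "inj_on r {1..m}" using r_perm by (simp add: bij_betw_def)
  have "R \<subseteq> S"
  proof
    fix x assume "x \<in> R"
    then have "r x \<in> r ` S" using R(2) S(2) assms(1) by blast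
    then show "x \<in> S" using inj_on_image_mem_iff[OF inj _ S(1)] \<open>x \<in> R\<close> R(1) by blast
  qed
  have fin: "finite S" using finite_subset[OF S(1)] by simp
  have i: "1 \<le> i" "i \<le> card R" "i \<le> card S"
    using assms(3,4) R card_image_ranks card_mono[OF fin \<open>R \<subseteq> S\<close>] by auto
  have "nth_least S i \<le> nth_least R i"
    using nth_least_antimono[OF fin \<open>R \<subseteq> S\<close> i(1,2)] .
  moreover have "nth_least S i \<in> {1..m}" "nth_least R i \<in> {1..m}"
    using nth_least_ranks R(1) S(1) i by auto
  ultimately have "p (r (nth_least S i)) \<le> p (r (nth_least R i))" by (intro r_sorted)
  then show ?thesis using R S i pord_image_ranks by simp
qed

lemma closed_rej_if_h_bound:
  assumes "I \<subseteq> {1..m}" "i \<in> {1..card I}" "real h * pord p I i \<le> real i * \<alpha>"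
  shows "I \<in> closed_rej \<alpha> p m"
proof -
  have "simes_rej \<alpha> p J" if J: "I \<subseteq> J" "J \<subseteq> {1..m}" for J
  proof (cases "h < card J")
    case True
    then show ?thesis using simes_rej_if_card_gt_h J(2) by blast
  next
    case False
    have "card I \<le> card J" using J finite_subset[OF J(2)] by (simp add: card_mono)
    then have "real (card J) * pord p J i \<le> real h * pord p I i"
      using False J assms(2) pord_antimono pord_nonneg by (intro mult_mono) auto
    then show ?thesis
      using assms(2,3) \<open>card I \<le> card J\<close> unfolding simes_rej_def
      by (intro bexI[of _ i]) auto
  qed
  then show ?thesis using assms(1) by (auto simp: closed_rej_def)
qed

lemma h_bound_if_closed_rej:
  assumes "I \<in> closed_rej \<alpha> p m"
  shows "\<exists>i\<in>{1..card I}. real h * pord p I i \<le> real i * \<alpha>"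
proof -
  have I: "I \<subseteq> {1..m}" using assms by (simp add: closed_rej_def)
  have hm: "h \<le> m" and not_rej_Kh: "\<not> simes_rej \<alpha> p (Kset r m h)"
    using h_alpha_le_m_and_not_simes_rej by auto
  show ?thesis
  proof (cases "h \<le> card I")
    case True
    have "simes_rej \<alpha> p I" using assms by (simp add: closed_rej_def)
    then obtain i where i: "i \<in> {1..card I}" "real (card I) * pord p I i \<le> real i * \<alpha>"
      by (auto simp: simes_rej_def)
    have "real h * pord p I i \<le> real (card I) * pord p I i"
      using True pord_nonneg[OF I] i(1) by (intro mult_right_mono) auto
    then show ?thesis using i by (intro bexI[of _ i]) auto
  next
    case False
    obtain R where R: "R \<subseteq> {1..m}" "I = r ` R" using obtain_ranks[OF I] .
    have R_fin: "finite R" and "card R \<le> h"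
      using R False card_image_ranks finite_subset[OF R(1)] by auto
    then obtain t where t: "t \<le> h" "card (R \<union> {m - t + 1..m}) = h"
      using exists_card_Un_top_interval hm by blast
    define S where "S = R \<union> {m - t + 1..m}"
    have S: "S \<subseteq> {1..m}" "card S = h" "finite S"
      using R(1) R_fin t hm by (auto simp: S_def)
    have "r ` S \<subseteq> {1..m}" using S(1) r_perm by (auto simp: bij_betw_def)
    moreover have "I \<subseteq> r ` S" using R(2) by (auto simp: S_def)
    ultimately have "simes_rej \<alpha> p (r ` S)" using assms by (auto simp: closed_rej_def)
    then obtain i where i: "1 \<le> i" "i \<le> h" "real h * p (r (nth_least S i)) \<le> real i * \<alpha>"
      using S(1,2) by (auto simp: simes_rej_image_ranks)
    define k where "k = nth_least S i"
    have "k \<in> S" using nth_least_in S(2,3) i by (simp add: k_def)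
    have "k \<notin> {m - t + 1..m}"
    proof
      assume "k \<in> {m - t + 1..m}"
      then have "{k..m} \<subseteq> S" by (auto simp: S_def)
      moreover have "S \<subseteq> {..m}" using S(1) by auto
      ultimately have "k + h = m + i"
        using nth_least_plus_card_eq[of S m i] S(2) i(1,2) by (simp add: k_def)
      then have "k = m - h + i" using hm by simp
      then show False using not_rej_Kh i hm simes_rej_Kset by (auto simp: k_def)
    qed
    then have "k \<in> R" "{x\<in>S. x < k} \<subseteq> R" using \<open>k \<in> S\<close> S(1) by (auto simp: S_def)
    then have "i \<le> card R" "nth_least R i = k"
      using nth_least_subset_eq[of S R i] S i by (auto simp: S_def k_def)
    then show ?thesis
      using R i pord_image_ranks card_image_ranks by (intro bexI[of _ i]) (auto simp: k_def)
  qed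
qed

end


theorem lemma2:
  fixes p :: "nat \<Rightarrow> real" and \<alpha> :: real and m :: nat and r :: "nat \<Rightarrow> nat"
    and I :: "nat set"
  assumes p_range: "\<And>j. j \<in> {1..m} \<Longrightarrow> 0 \<le> p j \<and> p j \<le> 1"
    and alpha_range: "0 \<le> \<alpha>" "\<alpha> \<le> 1"
    and r_perm: "bij_betw r {1..m} {1..m}"
    and r_sorted: "\<And>a b. a \<in> {1..m} \<Longrightarrow> b \<in> {1..m} \<Longrightarrow> a \<le> b \<Longrightarrow> p (r a) \<le> p (r b)"
    and I_sub: "I \<subseteq> {1..m}"
  shows "I \<in> closed_rej \<alpha> p m \<longleftrightarrow>
    (\<exists>i\<in>{1..card I}. real (h_alpha \<alpha> p r m) * pord p I i \<le> real i * \<alpha>)"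
proof -
  \<comment> \<open>Only nonnegativity of the p-values is needed; the bounds \<open>p j \<le> 1\<close> and \<open>alpha_range\<close> are not.\<close>
  interpret simes_closed_testing \<alpha> p r m
    using p_range r_perm r_sorted by unfold_locales auto
  show ?thesis using I_sub closed_rej_if_h_bound h_bound_if_closed_rej by blast
qed

end
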